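(* Let $G$ be a finite abelian group, $k\ge1$, and let $\varphi$ be an automorphism of finite order of the restricted wreath product $G\wr\mathbb{Z}^k=\Sigma\rtimes_\alpha\mathbb{Z}^k$. Let $\varphi'=\varphi|_\Sigma$. Then $R(\varphi')$ equals either $1$ or $\infty$.
   Context: Reidemeister number $R(\psi)$ of an endomorphism $\psi$ of a group $H$: the number of classes of $x\sim gx\psi(g^{-1})$, $g\in H$ (possibly $\infty$); for abelian $H$, $R(\psi)=|\mathrm{Coker}(\mathrm{Id}-\psi)|$. $\Sigma=\bigoplus_{x\in\mathbb{Z}^k}G_x$, each $G_x$ a copy of $G$, $\alpha(x)(g_y)=g_{x+y}$; $\Sigma$ is the torsion subset of $G\wr\mathbb{Z}^k$ and hence $\varphi$-invariant. *)

theory Defs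
  imports "HOL-Algebra.Algebra" "HOL-Library.Extended_Nat"
begin

text \<open>Z^k is represented by integer lists of length k; an element of Sigma = (+)_{x in Z^k} G_x
  is a finitely supported function f :: int list => 'a with values in carrier G
  (normalised to the identity outside lists of length k).\<close>

definition zvec :: "nat \<Rightarrow> int list set" where
  "zvec k = {x. length x = k}"

definition vadd :: "int list \<Rightarrow> int list \<Rightarrow> int list" where
  "vadd x y = map2 (+) x y"

definition vsub :: "int list \<Rightarrow> int list \<Rightarrow> int list" where
  "vsub x y = map2 (-) x y"

definition sigma_carrier :: "nat \<Rightarrow> ('a, 'b) monoid_scheme \<Rightarrow> (int list \<Rightarrow> 'a) set" where
  "sigma_carrier k G = {f. (\<forall>z. f z \<in> carrier G) \<and> (\<forall>z. length z \<noteq> k \<longrightarrow> f z = \<one>\<^bsub>G\<^esub>)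
                          \<and> finite {z. f z \<noteq> \<one>\<^bsub>G\<^esub>}}"

text \<open>alpha(x)(g_y) = g_{x+y}: shifting the support by x.\<close>
definition shift :: "nat \<Rightarrow> ('a, 'b) monoid_scheme \<Rightarrow> int list \<Rightarrow> (int list \<Rightarrow> 'a) \<Rightarrow> (int list \<Rightarrow> 'a)" where
  "shift k G x f = (\<lambda>z. if length z = k then f (vsub z x) else \<one>\<^bsub>G\<^esub>)"

definition wreath :: "('a, 'b) monoid_scheme \<Rightarrow> nat \<Rightarrow> ((int list \<Rightarrow> 'a) \<times> int list) monoid" where
  "wreath G k = \<lparr> carrier = sigma_carrier k G \<times> zvec k,
     monoid.mult = (\<lambda>(f, x) (g, y). (\<lambda>z. f z \<otimes>\<^bsub>G\<^esub> shift k G x g z, vadd x y)),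
     one = (\<lambda>_. \<one>\<^bsub>G\<^esub>, replicate k 0) \<rparr>"

definition wreath_base :: "('a, 'b) monoid_scheme \<Rightarrow> nat \<Rightarrow> ((int list \<Rightarrow> 'a) \<times> int list) monoid" where
  "wreath_base G k = (wreath G k) \<lparr> carrier := sigma_carrier k G \<times> {replicate k 0} \<rparr>"

definition twisted_conj :: "('c, 'd) monoid_scheme \<Rightarrow> ('c \<Rightarrow> 'c) \<Rightarrow> ('c \<times> 'c) set" where
  "twisted_conj H psi = {(x, y). x \<in> carrier H \<and> y \<in> carrier H \<and>
      (\<exists>g \<in> carrier H. y = g \<otimes>\<^bsub>H\<^esub> x \<otimes>\<^bsub>H\<^esub> inv\<^bsub>H\<^esub> (psi g))}"

definition reidemeister_number :: "('c, 'd) monoid_scheme \<Rightarrow> ('c \<Rightarrow> 'c) \<Rightarrow> enat" where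
  "reidemeister_number H psi =
     (if finite (carrier H // twisted_conj H psi)
      then enat (card (carrier H // twisted_conj H psi)) else \<infinity>)"

end

theory Submission
  imports Defs
begin

text \<open>
  Write \<open>\<delta> = Id - \<phi>'\<close> (multiplicatively \<open>b \<mapsto> b \<phi>'(b)\<^sup>-\<^sup>1\<close>) on the abelian group \<open>\<Sigma>\<close>, so that
  \<open>R(\<phi>') = |\<Sigma> / \<delta>(\<Sigma>)|\<close>. Since \<open>\<phi>'\<^sup>n = Id\<close> and \<open>\<Sigma>\<close> has exponent \<open>|G|\<close>, every power
  \<open>\<delta>\<^sup>j(s)\<close> is a \<open>\<int>/|G|\<close>-combination of \<open>s, \<phi>'(s), \<dots>, \<phi>'\<^sup>n\<^sup>-\<^sup>1(s)\<close>; these form a set of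
  bounded size, so some power \<open>P = \<delta>\<^sup>r\<close> is idempotent. If \<open>R(\<phi>')\<close> is finite, so is
  \<open>\<Sigma> / P(\<Sigma>) \<cong> ker P \<supseteq> Fix \<phi>'\<close>. On the other hand a nontrivial fixed point \<open>s\<close> produces
  infinitely many: translate \<open>s\<close> along the orbit of a far-away point of \<open>\<int>\<^sup>k\<close> under the
  automorphism \<open>\<psi>\<close> of \<open>\<int>\<^sup>k\<close> induced by \<open>\<phi>\<close> and multiply the translates. Hence finiteness of
  \<open>R(\<phi>')\<close> forces \<open>Fix \<phi>' = 1\<close>, so \<open>\<delta>\<close> and all its powers are injective, \<open>P = Id\<close>, and \<open>\<delta>\<close> is
  onto: \<open>R(\<phi>') = 1\<close>.
\<close>

section \<open>Reidemeister numbers of periodic endomorphisms of abelian groups\<close>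

lemma funpow_fact_idempotent:
  fixes f :: "'x \<Rightarrow> 'x"
  assumes "finite S" and "card S \<le> L" and orbit: "\<And>j. (f ^^ j) x \<in> S"
  shows "(f ^^ (fact L + fact L)) x = (f ^^ fact L) x"
proof -
  have "\<not> inj_on (\<lambda>j. (f ^^ j) x) {..L}"
    using card_inj_on_le[of "\<lambda>j. (f ^^ j) x" "{..L}" S] assms by auto
  then obtain i j where ij: "i < j" "j \<le> L" "(f ^^ i) x = (f ^^ j) x"
    unfolding inj_on_def by (metis atMost_iff linorder_neqE_nat)
  define d where "d = j - i"
  have "(f ^^ d) ((f ^^ i) x) = (f ^^ (d + i)) x"
    by (simp add: funpow_add)
  also have "\<dots> = (f ^^ i) x"
    using ij by (simp add: d_def)
  finally have "(f ^^ d) ((f ^^ i) x) = (f ^^ i) x" .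
  moreover obtain m where m: "fact L = m + i"
    using ij fact_ge_self[of L] le_Suc_ex[of i "fact L"] by (auto simp: add.commute)
  ultimately have period: "(f ^^ d) ((f ^^ fact L) x) = (f ^^ fact L) x"
    unfolding m by (metis comp_apply funpow_add add.commute)
  have "d dvd fact L"
    using ij by (intro dvd_fact) (auto simp: d_def)
  have "(f ^^ fact L) ((f ^^ fact L) x) = (f ^^ (fact L mod d)) ((f ^^ fact L) x)"
    using funpow_mod_eq[OF period] by simp
  also have "\<dots> = (f ^^ fact L) x"
    using \<open>d dvd fact L\<close> by simp
  finally show ?thesis
    by (simp add: funpow_add)
qed

lemma (in comm_group) hom_finprod:
  assumes "comm_group H" and h: "h \<in> hom G H" and f: "f \<in> A \<rightarrow> carrier G"
  shows "h (finprod G f A) = finprod H (\<lambda>i. h (f i)) A"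
  using f
proof (induction A rule: infinite_finite_induct)
  interpret H: comm_group H by fact
  interpret group_hom G H h
    by unfold_locales (fact h)
  { case (infinite A) then show ?case by simp }
  { case empty then show ?case by simp }
  { case (insert a A)
    then show ?case
      by (simp add: Pi_iff) }
qed

lemma (in comm_group) finprod_shift_cyclic:
  assumes "\<And>i. f i \<in> carrier G" and "f n = f 0"
  shows "finprod G (\<lambda>i. f (Suc i)) {..<n} = finprod G f {..<n}"
proof (cases n)
  case (Suc m)
  have f: "f \<in> {..Suc m} \<rightarrow> carrier G"
    using assms by auto
  have "finprod G (\<lambda>i. f (Suc i)) {..<n} \<otimes> f 0 = finprod G f {..n}"
    using finprod_Suc2[OF f] Suc by (simp add: lessThan_Suc_atMost)
  also have "\<dots> = finprod G f {..<n} \<otimes> f 0"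
    using finprod_Suc3[OF f] Suc assms by (simp add: m_comm)
  finally show ?thesis
    using assms by (simp add: r_cancel)
qed simp

lemma (in group) nat_pow_mod_exponent:
  assumes "x \<in> carrier G" and "x [^] E = \<one>"
  shows "x [^] (m mod E) = x [^] (m :: nat)"
proof -
  have "x [^] m = x [^] (E * (m div E)) \<otimes> x [^] (m mod E)"
    using assms(1) by (simp add: nat_pow_mult)
  also have "\<dots> = x [^] (m mod E)"
    using assms by (simp flip: nat_pow_pow)
  finally show ?thesis ..
qed

definition coboundary :: "('a, 'b) monoid_scheme \<Rightarrow> ('a \<Rightarrow> 'a) \<Rightarrow> 'a \<Rightarrow> 'a" where
  "coboundary G \<phi> b = b \<otimes>\<^bsub>G\<^esub> inv\<^bsub>G\<^esub> (\<phi> b)"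

definition finite_cokernel :: "('a, 'b) monoid_scheme \<Rightarrow> ('a \<Rightarrow> 'a) \<Rightarrow> bool" where
  "finite_cokernel G h \<longleftrightarrow>
     (\<exists>F. finite F \<and> F \<subseteq> carrier G \<and> (\<forall>a \<in> carrier G. \<exists>f \<in> F. \<exists>b \<in> carrier G. a = f \<otimes>\<^bsub>G\<^esub> h b))"

lemma (in comm_group) coboundary_hom:
  assumes "\<phi> \<in> hom G G"
  shows "coboundary G \<phi> \<in> hom G G"
proof -
  interpret group_hom G G \<phi>
    by unfold_locales (fact assms)
  show ?thesis
    by (intro homI) (simp_all add: coboundary_def inv_mult m_ac)
qed

lemma (in group) coboundary_eq_one_iff:
  "x \<in> carrier G \<Longrightarrow> \<phi> x \<in> carrier G \<Longrightarrow> coboundary G \<phi> x = \<one> \<longleftrightarrow> \<phi> x = x"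
  by (metis coboundary_def inv_closed inv_equality r_inv)

lemma (in group) funpow_hom: "h \<in> hom G G \<Longrightarrow> h ^^ j \<in> hom G G"
  by (induction j) (auto simp: id_def hom_def Pi_iff)

lemma (in group) finite_cokernel_funpow:
  assumes h: "h \<in> hom G G" and "finite_cokernel G h"
  shows "finite_cokernel G (h ^^ j)"
proof (induction j)
  case 0
  show ?case
    unfolding finite_cokernel_def by (rule exI[of _ "{\<one>}"]) auto
next
  case (Suc j)
  obtain F where F: "finite F" "F \<subseteq> carrier G" "\<forall>a \<in> carrier G. \<exists>f \<in> F. \<exists>b \<in> carrier G. a = f \<otimes> h b"
    using assms(2) by (auto simp: finite_cokernel_def)
  obtain Fj where Fj: "finite Fj" "Fj \<subseteq> carrier G"
    "\<forall>a \<in> carrier G. \<exists>f \<in> Fj. \<exists>b \<in> carrier G. a = f \<otimes> (h ^^ j) b"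
    using Suc by (auto simp: finite_cokernel_def)
  interpret hj: group_hom G G "h ^^ j"
    by unfold_locales (rule funpow_hom[OF h])
  define F' where "F' = (\<lambda>(f, f'). f \<otimes> (h ^^ j) f') ` (Fj \<times> F)"
  have "\<exists>f \<in> F'. \<exists>c \<in> carrier G. a = f \<otimes> (h ^^ Suc j) c" if a: "a \<in> carrier G" for a
  proof -
    obtain f b where fb: "f \<in> Fj" "b \<in> carrier G" "a = f \<otimes> (h ^^ j) b"
      using Fj a by blast
    obtain f' c where fc: "f' \<in> F" "c \<in> carrier G" "b = f' \<otimes> h c"
      using F fb by blast
    have "f \<in> carrier G" "f' \<in> carrier G" "h c \<in> carrier G"
      using fb fc F Fj h by (auto simp: hom_in_carrier)
    then have "a = (f \<otimes> (h ^^ j) f') \<otimes> (h ^^ j) (h c)"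
      using fb fc by (simp add: m_assoc)
    moreover have "f \<otimes> (h ^^ j) f' \<in> F'"
      using fb fc by (auto simp: F'_def)
    ultimately show ?thesis
      using fc by (metis comp_apply funpow_Suc_right)
  qed
  moreover have "finite F'"
    using F Fj by (simp add: F'_def)
  moreover have "F' \<subseteq> carrier G"
    using F(2) Fj(2) funpow_hom[OF h] by (auto simp: F'_def hom_in_carrier subset_iff)
  ultimately show ?case
    unfolding finite_cokernel_def by blast
qed

lemma (in group) finite_kernel_of_idempotent:
  assumes h: "P \<in> hom G G" and idem: "\<And>x. x \<in> carrier G \<Longrightarrow> P (P x) = P x"
    and "finite_cokernel G P"
  shows "finite {x \<in> carrier G. P x = \<one>}"
proof -
  interpret group_hom G G P
    by unfold_locales (fact h)
  obtain F where F: "finite F" "F \<subseteq> carrier G" "\<forall>a \<in> carrier G. \<exists>f \<in> F. \<exists>b \<in> carrier G. a = f \<otimes> P b"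
    using assms(3) by (auto simp: finite_cokernel_def)
  have "{x \<in> carrier G. P x = \<one>} \<subseteq> (\<lambda>f. f \<otimes> inv (P f)) ` F"
  proof safe
    fix x assume x: "x \<in> carrier G" "P x = \<one>"
    then obtain f b where fb: "f \<in> F" "b \<in> carrier G" "x = f \<otimes> P b"
      using F by blast
    have "P f \<otimes> P b = P x"
      using fb F idem by auto
    with x have "P f \<otimes> P b = \<one>"
      by simp
    moreover have "P f \<in> carrier G" "P b \<in> carrier G"
      using fb F by auto
    ultimately have "P b = inv (P f)"
      by (metis inv_comm inv_equality)
    with fb show "x \<in> (\<lambda>f. f \<otimes> inv (P f)) ` F"
      by (intro image_eqI[of _ _ f]) simp_all
  qed
  then show ?thesis
    using F(1) finite_surj by blast
qed

lemma (in comm_group) twisted_conj_iff: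
  "(x, y) \<in> twisted_conj G \<psi> \<longleftrightarrow>
     x \<in> carrier G \<and> (\<exists>g \<in> carrier G. y = x \<otimes> coboundary G \<psi> g)"
  if "\<psi> \<in> hom G G"
proof -
  have "g \<otimes> x \<otimes> inv (\<psi> g) = x \<otimes> coboundary G \<psi> g" if "x \<in> carrier G" "g \<in> carrier G" for x g
    using that \<open>\<psi> \<in> hom G G\<close> by (simp add: coboundary_def hom_in_carrier m_ac)
  then show ?thesis
    using \<open>\<psi> \<in> hom G G\<close> by (auto simp: twisted_conj_def coboundary_def hom_in_carrier)
qed

lemma (in comm_group) twisted_conj_equiv:
  assumes "\<psi> \<in> hom G G"
  shows "equiv (carrier G) (twisted_conj G \<psi>)"
proof -
  interpret cob: group_hom G G "coboundary G \<psi>"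
    by unfold_locales (rule coboundary_hom[OF assms])
  show ?thesis
  proof (rule equivI)
    show "refl_on (carrier G) (twisted_conj G \<psi>)"
      unfolding refl_on_def using assms
      by (auto simp: twisted_conj_iff intro!: bexI[of _ \<one>])
    show "sym (twisted_conj G \<psi>)"
    proof (rule symI)
      fix x y assume "(x, y) \<in> twisted_conj G \<psi>"
      then obtain g where "x \<in> carrier G" "g \<in> carrier G" "y = x \<otimes> coboundary G \<psi> g"
        using assms by (auto simp: twisted_conj_iff)
      then have "y \<in> carrier G" "x = y \<otimes> coboundary G \<psi> (inv g)"
        by (simp_all add: m_assoc)
      with \<open>g \<in> carrier G\<close> show "(y, x) \<in> twisted_conj G \<psi>"
        using assms twisted_conj_iff by blast
    qed
    show "trans (twisted_conj G \<psi>)"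
    proof (rule transI)
      fix x y z assume "(x, y) \<in> twisted_conj G \<psi>" "(y, z) \<in> twisted_conj G \<psi>"
      then obtain g h where "x \<in> carrier G" "g \<in> carrier G" "h \<in> carrier G"
        "y = x \<otimes> coboundary G \<psi> g" "z = y \<otimes> coboundary G \<psi> h"
        using assms by (auto simp: twisted_conj_iff)
      then have "z = x \<otimes> coboundary G \<psi> (g \<otimes> h)"
        by (simp add: m_assoc)
      with \<open>x \<in> carrier G\<close> \<open>g \<in> carrier G\<close> \<open>h \<in> carrier G\<close> show "(x, z) \<in> twisted_conj G \<psi>"
        using assms twisted_conj_iff by blast
    qed
  qed (auto simp: twisted_conj_def)
qed

lemma (in comm_group) finite_cokernel_if_finite_twisted_classes:
  assumes hom: "\<psi> \<in> hom G G" and fin: "finite (carrier G // twisted_conj G \<psi>)"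
  shows "finite_cokernel G (coboundary G \<psi>)"
proof -
  interpret cob: group_hom G G "coboundary G \<psi>"
    by unfold_locales (rule coboundary_hom[OF hom])
  let ?R = "twisted_conj G \<psi>"
  have eqv: "equiv (carrier G) ?R"
    by (rule twisted_conj_equiv[OF hom])
  define F where "F = (\<lambda>C. SOME p. p \<in> C) ` (carrier G // ?R)"
  have rep: "(SOME p. p \<in> ?R `` {a}) \<in> ?R `` {a}" if "a \<in> carrier G" for a
    using equiv_class_self[OF eqv that] by (rule someI)
  have "\<exists>f \<in> F. \<exists>b \<in> carrier G. a = f \<otimes> coboundary G \<psi> b" if a: "a \<in> carrier G" for a
  proof -
    define f where "f = (SOME p. p \<in> ?R `` {a})"
    obtain g where g: "g \<in> carrier G" "f = a \<otimes> coboundary G \<psi> g"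
      using rep[OF a] hom by (auto simp: f_def twisted_conj_iff)
    then have "a = f \<otimes> coboundary G \<psi> (inv g)"
      using a by (simp add: m_assoc)
    moreover have "f \<in> F"
      using a unfolding F_def f_def by (intro imageI quotientI)
    ultimately show ?thesis
      using g by blast
  qed
  moreover have "F \<subseteq> carrier G"
  proof -
    have "?R `` {a} \<subseteq> carrier G" for a
      by (auto simp: twisted_conj_def)
    then show ?thesis
      unfolding F_def quotient_def using rep by blast
  qed
  moreover have "finite F"
    using fin by (simp add: F_def)
  ultimately show ?thesis
    unfolding finite_cokernel_def by (intro exI[of _ F]) auto
qed

lemma (in comm_group) reidemeister_number_eq_one:
  assumes hom: "\<psi> \<in> hom G G"
    and surj: "\<And>s. s \<in> carrier G \<Longrightarrow> \<exists>b \<in> carrier G. s = coboundary G \<psi> b"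
  shows "reidemeister_number G \<psi> = 1"
proof -
  let ?R = "twisted_conj G \<psi>"
  have "(\<one>, s) \<in> ?R" if s: "s \<in> carrier G" for s
  proof -
    obtain b where "b \<in> carrier G" "s = coboundary G \<psi> b"
      using surj[OF s] by blast
    then have "s = \<one> \<otimes> coboundary G \<psi> b"
      using s by simp
    with \<open>b \<in> carrier G\<close> show ?thesis
      using twisted_conj_iff[OF hom] by blast
  qed
  then have "?R `` {s} = ?R `` {\<one>}" if "s \<in> carrier G" for s
    using that by (intro equiv_class_eq[OF twisted_conj_equiv[OF hom], symmetric])
  then have "carrier G // ?R = {?R `` {\<one>}}"
    unfolding quotient_def by blast
  then show ?thesis
    by (simp add: reidemeister_number_def one_enat_def)
qed

locale periodic_endomorphism = comm_group G for G (structure) +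
  fixes \<phi> :: "'a \<Rightarrow> 'a" and n E :: nat
  assumes hom: "\<phi> \<in> hom G G"
    and period_pos: "0 < n" and periodic: "\<And>x. x \<in> carrier G \<Longrightarrow> (\<phi> ^^ n) x = x"
    and exponent_pos: "0 < E" and exponent: "\<And>x. x \<in> carrier G \<Longrightarrow> x [^] E = \<one>"
begin

sublocale endo: group_hom G G \<phi>
  by unfold_locales (fact hom)

lemma funpow_closed [simp]: "x \<in> carrier G \<Longrightarrow> (\<phi> ^^ i) x \<in> carrier G"
  by (induction i) auto

definition orbit_combination :: "'a \<Rightarrow> (nat \<Rightarrow> nat) \<Rightarrow> 'a" where
  "orbit_combination s c = finprod G (\<lambda>i. (\<phi> ^^ i) s [^] c i) {..<n}"

context
  fixes s assumes s: "s \<in> carrier G"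
begin

lemma orbit_combination_closed [simp]: "orbit_combination s c \<in> carrier G"
  using s by (simp add: orbit_combination_def Pi_iff)

lemma orbit_combination_mult:
  "orbit_combination s c \<otimes> orbit_combination s d = orbit_combination s (\<lambda>i. c i + d i)"
  using s by (simp add: orbit_combination_def Pi_iff nat_pow_mult flip: finprod_multf)

lemma orbit_combination_mod:
  "orbit_combination s c = orbit_combination s (\<lambda>i. c i mod E)"
  using s unfolding orbit_combination_def
  by (intro finprod_cong') (simp_all add: Pi_iff nat_pow_mod_exponent exponent)

lemma orbit_combination_inv:
  "inv (orbit_combination s c) = orbit_combination s (\<lambda>i. (E - 1) * c i)"
proof (rule inv_equality)
  have "(\<lambda>i. (E - 1) * c i + c i) = (\<lambda>i. E * c i)"
    using exponent_pos by (auto simp: algebra_simps)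
  then have "orbit_combination s (\<lambda>i. (E - 1) * c i) \<otimes> orbit_combination s c
      = orbit_combination s (\<lambda>i. E * c i)"
    by (simp add: orbit_combination_mult)
  also have "\<dots> = \<one>"
    using s by (simp add: orbit_combination_def exponent finprod_one_eqI flip: nat_pow_pow)
  finally show "orbit_combination s (\<lambda>i. (E - 1) * c i) \<otimes> orbit_combination s c = \<one>" .
qed simp_all

lemma orbit_combination_rotate:
  "\<phi> (orbit_combination s c) = orbit_combination s (\<lambda>i. if i = 0 then c (n - 1) else c (i - 1))"
proof -
  define g where "g = (\<lambda>i. (\<phi> ^^ i) s [^] (if i = 0 then c (n - 1) else c (i - 1)))"
  have "\<phi> (orbit_combination s c) = finprod G (\<lambda>i. \<phi> ((\<phi> ^^ i) s [^] c i)) {..<n}"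
    unfolding orbit_combination_def using s by (intro hom_finprod comm_group_axioms hom) (simp add: Pi_iff)
  also have "\<dots> = finprod G (\<lambda>i. g (Suc i)) {..<n}"
    using s by (intro finprod_cong') (simp_all add: g_def Pi_iff endo.hom_nat_pow)
  also have "\<dots> = finprod G g {..<n}"
    using s periodic[OF s] period_pos by (intro finprod_shift_cyclic) (simp_all add: g_def)
  finally show ?thesis
    by (simp add: orbit_combination_def g_def)
qed

lemma orbit_combination_unit: "orbit_combination s (\<lambda>i. if i = 0 then 1 else 0) = s"
proof -
  have "orbit_combination s (\<lambda>i. if i = 0 then 1 else 0) = finprod G (\<lambda>i. if 0 = i then (\<phi> ^^ i) s else \<one>) {..<n}"
    unfolding orbit_combination_def using s by (intro finprod_cong') (auto simp: Pi_iff)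
  also have "\<dots> = s"
    using s period_pos by (subst finprod_singleton) (auto simp: Pi_iff)
  finally show ?thesis .
qed

end

abbreviation \<delta> where "\<delta> \<equiv> coboundary G \<phi>"

sublocale cob: group_hom G G \<delta>
  by unfold_locales (rule coboundary_hom[OF hom])

lemma coboundary_funpow_in_orbit_combinations:
  assumes s: "s \<in> carrier G"
  shows "(\<delta> ^^ j) s \<in> orbit_combination s ` ({..<n} \<rightarrow>\<^sub>E {..<E})"
proof -
  have "\<exists>c. (\<delta> ^^ j) s = orbit_combination s c"
  proof (induction j)
    case 0
    show ?case
      using orbit_combination_unit[OF s] by (metis funpow_0)
  next
    case (Suc j)
    then obtain c where "(\<delta> ^^ j) s = orbit_combination s c" ..
    then have "(\<delta> ^^ Suc j) s = \<delta> (orbit_combination s c)"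
      by simp
    also have "\<dots> = orbit_combination s
        (\<lambda>i. c i + (E - 1) * (if i = 0 then c (n - 1) else c (i - 1)))"
      using s by (simp add: coboundary_def orbit_combination_rotate orbit_combination_inv
          orbit_combination_mult)
    finally show ?case
      by blast
  qed
  then obtain c where "(\<delta> ^^ j) s = orbit_combination s c" ..
  also have "\<dots> = orbit_combination s (\<lambda>i. c i mod E)"
    by (rule orbit_combination_mod[OF s])
  also have "\<dots> = orbit_combination s (\<lambda>i \<in> {..<n}. c i mod E)"
    unfolding orbit_combination_def using s by (intro finprod_cong') (auto simp: Pi_iff)
  finally have "(\<delta> ^^ j) s = orbit_combination s (\<lambda>i \<in> {..<n}. c i mod E)" .
  moreover have "(\<lambda>i \<in> {..<n}. c i mod E) \<in> {..<n} \<rightarrow>\<^sub>E {..<E}"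
    using exponent_pos by auto
  ultimately show ?thesis
    by (rule image_eqI)
qed

lemma coboundary_eventually_idempotent:
  "\<exists>r > 0. \<forall>x \<in> carrier G. (\<delta> ^^ (r + r)) x = (\<delta> ^^ r) x"
proof (intro exI[of _ "fact (E ^ n)"] conjI ballI)
  show "0 < (fact (E ^ n) :: nat)"
    by simp
  fix x assume x: "x \<in> carrier G"
  let ?S = "orbit_combination x ` ({..<n} \<rightarrow>\<^sub>E {..<E})"
  have "card ?S \<le> E ^ n"
    using card_image_le[of "{..<n} \<rightarrow>\<^sub>E {..<E}" "orbit_combination x"]
    by (simp add: card_PiE finite_PiE)
  then show "(\<delta> ^^ (fact (E ^ n) + fact (E ^ n))) x = (\<delta> ^^ fact (E ^ n)) x"
    using coboundary_funpow_in_orbit_combinations[OF x]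
    by (intro funpow_fact_idempotent[of ?S]) (simp_all add: finite_PiE)
qed

lemma coboundary_funpow_fixed_point:
  assumes "x \<in> carrier G" and "\<phi> x = x"
  shows "(\<delta> ^^ Suc j) x = \<one>"
proof (induction j)
  case (Suc j)
  then show ?case
    using assms by (simp add: coboundary_def)
qed (use assms in \<open>simp add: coboundary_def\<close>)

lemma finite_fixed_points_if_finite_cokernel:
  assumes "finite_cokernel G \<delta>"
  shows "finite {x \<in> carrier G. \<phi> x = x}"
proof -
  obtain r where r: "0 < r" "\<And>x. x \<in> carrier G \<Longrightarrow> (\<delta> ^^ (r + r)) x = (\<delta> ^^ r) x"
    using coboundary_eventually_idempotent by blast
  have "finite {x \<in> carrier G. (\<delta> ^^ r) x = \<one>}"
  proof (rule finite_kernel_of_idempotent)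
    show "\<delta> ^^ r \<in> hom G G"
      by (rule funpow_hom[OF cob.homh])
    show "(\<delta> ^^ r) ((\<delta> ^^ r) x) = (\<delta> ^^ r) x" if "x \<in> carrier G" for x
      using r(2)[OF that] by (simp add: funpow_add)
    show "finite_cokernel G (\<delta> ^^ r)"
      by (rule finite_cokernel_funpow[OF cob.homh assms])
  qed
  moreover have "{x \<in> carrier G. \<phi> x = x} \<subseteq> {x \<in> carrier G. (\<delta> ^^ r) x = \<one>}"
    using coboundary_funpow_fixed_point \<open>0 < r\<close> gr0_implies_Suc by blast
  ultimately show ?thesis
    by (rule finite_subset[rotated])
qed

lemma coboundary_surjective_if_no_fixed_points:
  assumes fixed: "{x \<in> carrier G. \<phi> x = x} \<subseteq> {\<one>}" and s: "s \<in> carrier G"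
  shows "\<exists>b \<in> carrier G. s = \<delta> b"
proof -
  obtain r where r: "0 < r" "\<And>x. x \<in> carrier G \<Longrightarrow> (\<delta> ^^ (r + r)) x = (\<delta> ^^ r) x"
    using coboundary_eventually_idempotent by blast
  have "kernel G G \<delta> = {\<one>}"
    using fixed by (auto simp: kernel_def coboundary_eq_one_iff)
  then have inj_\<delta>: "inj_on \<delta> (carrier G)"
    by (rule cob.trivial_ker_imp_inj)
  have inj: "inj_on (\<delta> ^^ j) (carrier G)" for j
  proof (induction j)
    case (Suc j)
    have "inj_on (\<delta> ^^ j) (\<delta> ` carrier G)"
      using Suc.IH by (rule inj_on_subset) auto
    with inj_\<delta> show ?case
      unfolding funpow_Suc_right by (rule comp_inj_on)
  qed simp
  have closed: "(\<delta> ^^ j) x \<in> carrier G" if "x \<in> carrier G" for j x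
    using that by (rule hom_in_carrier[OF funpow_hom[OF cob.homh]])
  have "(\<delta> ^^ r) ((\<delta> ^^ r) s) = (\<delta> ^^ r) s"
    using r(2)[OF s] by (simp add: funpow_add)
  then have "(\<delta> ^^ r) s = s"
    by (rule inj_onD[OF inj _ closed[OF s] s])
  moreover obtain r' where "r = Suc r'"
    using \<open>0 < r\<close> gr0_implies_Suc by blast
  ultimately have "s = \<delta> ((\<delta> ^^ r') s)"
    by simp
  then show ?thesis
    using closed[OF s] by blast
qed

lemma reidemeister_number_one_or_infinite:
  assumes "finite {x \<in> carrier G. \<phi> x = x} \<Longrightarrow> {x \<in> carrier G. \<phi> x = x} \<subseteq> {\<one>}"
  shows "reidemeister_number G \<phi> = 1 \<or> reidemeister_number G \<phi> = \<infinity>"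
proof (cases "finite (carrier G // twisted_conj G \<phi>)")
  case True
  then have "finite {x \<in> carrier G. \<phi> x = x}"
    by (intro finite_fixed_points_if_finite_cokernel finite_cokernel_if_finite_twisted_classes hom)
  then have "{x \<in> carrier G. \<phi> x = x} \<subseteq> {\<one>}"
    by (rule assms)
  then have "reidemeister_number G \<phi> = 1"
    by (intro reidemeister_number_eq_one hom coboundary_surjective_if_no_fixed_points)
  then show ?thesis ..
qed (simp add: reidemeister_number_def)

end

section \<open>The restricted wreath product\<close>

lemma zvec_iff [simp]: "x \<in> zvec k \<longleftrightarrow> length x = k"
  by (simp add: zvec_def)

lemma length_vadd [simp]: "length (vadd x y) = min (length x) (length y)"
  and length_vsub [simp]: "length (vsub x y) = min (length x) (length y)"
  by (simp_all add: vadd_def vsub_def)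

lemma nth_vadd [simp]: "l < length x \<Longrightarrow> l < length y \<Longrightarrow> vadd x y ! l = x ! l + y ! l"
  and nth_vsub [simp]: "l < length x \<Longrightarrow> l < length y \<Longrightarrow> vsub x y ! l = x ! l - y ! l"
  by (simp_all add: vadd_def vsub_def)

lemma vadd_zero_left: "length x = k \<Longrightarrow> vadd (replicate k 0) x = x"
  and vadd_zero_right: "length x = k \<Longrightarrow> vadd x (replicate k 0) = x"
  and vsub_zero: "length x = k \<Longrightarrow> vsub x (replicate k 0) = x"
  by (auto intro: nth_equalityI)

lemma vadd_assoc:
  "length x = k \<Longrightarrow> length y = k \<Longrightarrow> length z = k \<Longrightarrow> vadd (vadd x y) z = vadd x (vadd y z)"
  by (auto intro: nth_equalityI)

lemma vsub_vadd_right: "length x = k \<Longrightarrow> length y = k \<Longrightarrow> length z = k \<Longrightarrow> vsub (vsub z x) y = vsub z (vadd x y)"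
  and vadd_vsub_cancel: "length x = k \<Longrightarrow> length z = k \<Longrightarrow> vadd (vsub z x) x = z"
  and vsub_vadd_cancel: "length x = k \<Longrightarrow> length z = k \<Longrightarrow> vsub (vadd x z) x = z"
  and vadd_uminus: "length x = k \<Longrightarrow> vadd (map uminus x) x = replicate k 0"
  by (auto intro: nth_equalityI)

lemma map_mult_eq_zeros_iff:
  "(c::int) \<noteq> 0 \<Longrightarrow> map ((*) c) xs = replicate (length xs) 0 \<longleftrightarrow> xs = replicate (length xs) 0"
  by (induction xs) auto

lemma finite_int_lists_bounded:
  assumes "finite A"
  shows "\<exists>B \<ge> 0. \<forall>a \<in> A. \<forall>l < length a. \<bar>a ! l\<bar> \<le> (B :: int)"
proof -
  define B where "B = (\<Sum>a \<in> A. \<Sum>l < length a. \<bar>a ! l\<bar>)"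
  have "\<bar>a ! l\<bar> \<le> B" if "a \<in> A" "l < length a" for a l
  proof -
    have "\<bar>a ! l\<bar> \<le> (\<Sum>l < length a. \<bar>a ! l\<bar>)"
      using that by (intro member_le_sum) simp_all
    moreover have "(\<Sum>l < length a. \<bar>a ! l\<bar>) \<le> B"
      unfolding B_def using that assms by (intro member_le_sum) (simp_all add: sum_nonneg)
    ultimately show ?thesis
      by linarith
  qed
  moreover have "0 \<le> B"
    unfolding B_def by (simp add: sum_nonneg)
  ultimately show ?thesis
    by blast
qed

context group
begin

lemma sigma_carrierI:
  "(\<And>z. f z \<in> carrier G) \<Longrightarrow> (\<And>z. length z \<noteq> k \<Longrightarrow> f z = \<one>) \<Longrightarrow> finite {z. f z \<noteq> \<one>}
    \<Longrightarrow> f \<in> sigma_carrier k G"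
  by (simp add: sigma_carrier_def)

lemma sigma_carrier_closed [simp]: "f \<in> sigma_carrier k G \<Longrightarrow> f z \<in> carrier G"
  and sigma_carrier_outside: "f \<in> sigma_carrier k G \<Longrightarrow> length z \<noteq> k \<Longrightarrow> f z = \<one>"
  and sigma_carrier_finite_support: "f \<in> sigma_carrier k G \<Longrightarrow> finite {z. f z \<noteq> \<one>}"
  by (simp_all add: sigma_carrier_def)

lemma sigma_carrier_one [simp]: "(\<lambda>_. \<one>) \<in> sigma_carrier k G"
  by (rule sigma_carrierI) simp_all

lemma sigma_carrier_mult:
  assumes f: "f \<in> sigma_carrier k G" and g: "g \<in> sigma_carrier k G"
  shows "(\<lambda>z. f z \<otimes> g z) \<in> sigma_carrier k G"
proof (rule sigma_carrierI)
  have "{z. f z \<otimes> g z \<noteq> \<one>} \<subseteq> {z. f z \<noteq> \<one>} \<union> {z. g z \<noteq> \<one>}"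
    by auto
  then show "finite {z. f z \<otimes> g z \<noteq> \<one>}"
    using f g by (blast intro: finite_subset sigma_carrier_finite_support)
qed (simp_all add: sigma_carrier_closed[OF f] sigma_carrier_closed[OF g]
    sigma_carrier_outside[OF f] sigma_carrier_outside[OF g])

lemma sigma_carrier_inv:
  assumes f: "f \<in> sigma_carrier k G"
  shows "(\<lambda>z. inv (f z)) \<in> sigma_carrier k G"
proof (rule sigma_carrierI)
  have "{z. inv (f z) \<noteq> \<one>} = {z. f z \<noteq> \<one>}"
    using f by auto
  then show "finite {z. inv (f z) \<noteq> \<one>}"
    using sigma_carrier_finite_support[OF f] by simp
qed (simp_all add: sigma_carrier_closed[OF f] sigma_carrier_outside[OF f])

lemma shift_closed [simp]: "f \<in> sigma_carrier k G \<Longrightarrow> shift k G x f z \<in> carrier G"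
  by (simp add: shift_def)

lemma shift_in_sigma_carrier:
  assumes f: "f \<in> sigma_carrier k G" and x: "length x = k"
  shows "shift k G x f \<in> sigma_carrier k G"
proof (rule sigma_carrierI)
  have "{z. shift k G x f z \<noteq> \<one>} \<subseteq> (\<lambda>w. vadd w x) ` {w. f w \<noteq> \<one>}"
  proof
    fix z assume "z \<in> {z. shift k G x f z \<noteq> \<one>}"
    then have "length z = k" "f (vsub z x) \<noteq> \<one>"
      by (simp_all add: shift_def split: if_splits)
    then show "z \<in> (\<lambda>w. vadd w x) ` {w. f w \<noteq> \<one>}"
      using vadd_vsub_cancel[OF x] by (intro image_eqI[of _ _ "vsub z x"]) simp_all
  qed
  then show "finite {z. shift k G x f z \<noteq> \<one>}"
    using sigma_carrier_finite_support[OF f] by (rule finite_subset[OF _ finite_imageI])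
qed (simp_all add: sigma_carrier_closed[OF f] shift_def)

lemma shift_zero: "f \<in> sigma_carrier k G \<Longrightarrow> shift k G (replicate k 0) f = f"
  by (rule ext) (simp add: shift_def vsub_zero sigma_carrier_outside)

lemma shift_one [simp]: "shift k G x (\<lambda>_. \<one>) = (\<lambda>_. \<one>)"
  by (simp add: shift_def)

lemma shift_mult: "shift k G x (\<lambda>z. f z \<otimes> g z) = (\<lambda>z. shift k G x f z \<otimes> shift k G x g z)"
  by (simp add: shift_def fun_eq_iff)

lemma shift_shift:
  "length x = k \<Longrightarrow> length y = k \<Longrightarrow> shift k G x (shift k G y f) = shift k G (vadd x y) f"
  by (simp add: shift_def vsub_vadd_right fun_eq_iff)

lemma wreath_mult [simp]:
  "(f, x) \<otimes>\<^bsub>wreath G k\<^esub> (g, y) = (\<lambda>z. f z \<otimes> shift k G x g z, vadd x y)"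
  and wreath_carrier [simp]: "carrier (wreath G k) = sigma_carrier k G \<times> zvec k"
  and wreath_one [simp]: "\<one>\<^bsub>wreath G k\<^esub> = (\<lambda>_. \<one>, replicate k 0)"
  by (simp_all add: wreath_def)

lemma wreath_group: "group (wreath G k)"
proof (rule groupI)
  fix a b assume "a \<in> carrier (wreath G k)" "b \<in> carrier (wreath G k)"
  then show "a \<otimes>\<^bsub>wreath G k\<^esub> b \<in> carrier (wreath G k)"
    by (auto simp: sigma_carrier_mult shift_in_sigma_carrier)
next
  fix a b c assume "a \<in> carrier (wreath G k)" "b \<in> carrier (wreath G k)" "c \<in> carrier (wreath G k)"
  then obtain f x g y h w where abc: "a = (f, x)" "b = (g, y)" "c = (h, w)"
    and \<Sigma>: "f \<in> sigma_carrier k G" "g \<in> sigma_carrier k G" "h \<in> sigma_carrier k G"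
    and len: "length x = k" "length y = k" "length w = k"
    by auto
  show "a \<otimes>\<^bsub>wreath G k\<^esub> b \<otimes>\<^bsub>wreath G k\<^esub> c = a \<otimes>\<^bsub>wreath G k\<^esub> (b \<otimes>\<^bsub>wreath G k\<^esub> c)"
    using \<Sigma> len
    by (simp add: abc shift_mult shift_shift m_assoc vadd_assoc sigma_carrier_closed[OF \<Sigma>(1)])
next
  fix a assume "a \<in> carrier (wreath G k)"
  then obtain f x where a: "a = (f, x)" and f: "f \<in> sigma_carrier k G" and x: "length x = k"
    by auto
  show "\<one>\<^bsub>wreath G k\<^esub> \<otimes>\<^bsub>wreath G k\<^esub> a = a"
    using f x by (simp add: a shift_zero vadd_zero_left sigma_carrier_closed[OF f])
  define g where "g = shift k G (map uminus x) f"
  have g: "g \<in> sigma_carrier k G"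
    using shift_in_sigma_carrier[OF f] x by (simp add: g_def)
  have "(\<lambda>z. inv (g z), map uminus x) \<otimes>\<^bsub>wreath G k\<^esub> a = \<one>\<^bsub>wreath G k\<^esub>"
    using f g x
    by (simp add: a g_def shift_shift vadd_uminus shift_zero sigma_carrier_closed[OF g])
  moreover have "(\<lambda>z. inv (g z), map uminus x) \<in> carrier (wreath G k)"
    using sigma_carrier_inv[OF g] x by simp
  ultimately show "\<exists>b \<in> carrier (wreath G k). b \<otimes>\<^bsub>wreath G k\<^esub> a = \<one>\<^bsub>wreath G k\<^esub>"
    by blast
qed simp

lemma wreath_base_simps [simp]:
  "carrier (wreath_base G k) = sigma_carrier k G \<times> {replicate k 0}"
  "a \<otimes>\<^bsub>wreath_base G k\<^esub> b = a \<otimes>\<^bsub>wreath G k\<^esub> b"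
  "\<one>\<^bsub>wreath_base G k\<^esub> = \<one>\<^bsub>wreath G k\<^esub>"
  by (simp_all add: wreath_base_def wreath_def)

lemma wreath_base_subgroup: "subgroup (sigma_carrier k G \<times> {replicate k (0::int)}) (wreath G k)"
proof (rule group.subgroupI[OF wreath_group])
  fix a :: "(int list \<Rightarrow> 'a) \<times> int list" assume "a \<in> sigma_carrier k G \<times> {replicate k 0}"
  then obtain f where a: "a = (f, replicate k 0)" and f: "f \<in> sigma_carrier k G"
    by auto
  have "inv\<^bsub>wreath G k\<^esub> a = (\<lambda>z. inv (f z), replicate k 0)"
    using f sigma_carrier_inv[OF f]
    by (intro group.inv_equality[OF wreath_group]) (simp_all add: a shift_zero[OF f] vadd_zero_left sigma_carrier_closed[OF f])
  then show "inv\<^bsub>wreath G k\<^esub> a \<in> sigma_carrier k G \<times> {replicate k 0}"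
    using sigma_carrier_inv[OF f] by simp
next
  show "sigma_carrier k G \<times> {replicate k (0::int)} \<noteq> {}"
    using sigma_carrier_one[of k] by blast
qed (auto simp: shift_zero vadd_zero_left sigma_carrier_mult)

lemma evaluation_hom: "(\<lambda>a. fst a z) \<in> hom (wreath_base G k) G"
  by (auto intro!: homI simp: shift_zero vadd_zero_left)

lemma wreath_base_group: "group (wreath_base G k)"
  unfolding wreath_base_def by (rule subgroup.subgroup_is_group[OF wreath_base_subgroup wreath_group])

end

lemma (in comm_group) wreath_base_comm_group: "comm_group (wreath_base G k)"
proof (rule group.group_comm_groupI[OF wreath_base_group])
  fix a b assume "a \<in> carrier (wreath_base G k)" "b \<in> carrier (wreath_base G k)"
  then obtain f g where "a = (f, replicate k 0)" "b = (g, replicate k 0)"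
    and f: "f \<in> sigma_carrier k G" and g: "g \<in> sigma_carrier k G"
    by auto
  then show "a \<otimes>\<^bsub>wreath_base G k\<^esub> b = b \<otimes>\<^bsub>wreath_base G k\<^esub> a"
    by (simp add: shift_zero[OF f] shift_zero[OF g] m_comm sigma_carrier_closed[OF f]
        sigma_carrier_closed[OF g] vadd_zero_left)
qed

section \<open>Automorphisms of finite order of the wreath product\<close>

locale wreath_automorphism = comm_group G for G (structure) +
  fixes k :: nat and \<phi> :: "(int list \<Rightarrow> 'a) \<times> int list \<Rightarrow> (int list \<Rightarrow> 'a) \<times> int list" and n :: nat
  assumes finite_carrier: "finite (carrier G)" and dimension_pos: "1 \<le> k"
    and iso: "\<phi> \<in> iso (wreath G k) (wreath G k)"
    and period_pos: "0 < n" and periodic: "\<forall>a \<in> carrier (wreath G k). (\<phi> ^^ n) a = a"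
begin

abbreviation "W \<equiv> wreath G k"
abbreviation "\<Sigma> \<equiv> sigma_carrier k G"
abbreviation "origin \<equiv> replicate k (0::int)"

sublocale \<Phi>: group_hom W W \<phi>
  using iso by (intro group_hom.intro group_hom_axioms.intro wreath_group) (simp add: iso_def)

lemma funpow_phi_closed: "a \<in> carrier W \<Longrightarrow> (\<phi> ^^ j) a \<in> carrier W"
  using \<Phi>.hom_closed by (induction j) (simp_all del: wreath_carrier)

lemma phi_one [simp]: "\<phi> (\<lambda>_. \<one>, origin) = (\<lambda>_. \<one>, origin)"
  using \<Phi>.hom_one by simp

lemma wreath_pow_snd:
  assumes "a \<in> carrier W"
  shows "snd (a [^]\<^bsub>W\<^esub> j) = map ((*) (int j)) (snd a)"
proof (induction j)
  case 0
  show ?case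
    using assms by (auto intro: nth_equalityI)
next
  case (Suc j)
  obtain f x where "a = (f, x)"
    by fastforce
  moreover obtain g y where "a [^]\<^bsub>W\<^esub> j = (g, y)"
    by fastforce
  ultimately show ?case
    using assms Suc \<Phi>.G.nat_pow_closed[OF assms, of j]
    by (auto simp: algebra_simps intro!: nth_equalityI)
qed

lemma wreath_pow_base:
  "f \<in> \<Sigma> \<Longrightarrow> (f, origin) [^]\<^bsub>W\<^esub> (j::nat) = (\<lambda>z. f z [^] j, origin)"
  by (induction j) (simp_all add: shift_zero vadd_zero_left)

text \<open>\<open>\<Sigma>\<close> is the torsion of \<open>W\<close>, hence \<open>\<phi>\<close>-invariant.\<close>

lemma phi_base_snd:
  assumes f: "f \<in> \<Sigma>"
  shows "snd (\<phi> (f, origin)) = origin"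
proof -
  have closed: "\<phi> (f, origin) \<in> carrier W"
    using f by (intro \<Phi>.hom_closed) simp
  have "(f, origin) [^]\<^bsub>W\<^esub> order G = \<one>\<^bsub>W\<^esub>"
    using finite_carrier f by (simp add: wreath_pow_base pow_order_eq_1)
  then have "\<phi> (f, origin) [^]\<^bsub>W\<^esub> order G = \<one>\<^bsub>W\<^esub>"
    using f by (simp flip: \<Phi>.hom_nat_pow)
  then have "map ((*) (int (order G))) (snd (\<phi> (f, origin))) = origin"
    using wreath_pow_snd[OF closed, of "order G"] by simp
  moreover have "0 < order G"
    using finite_carrier by (simp add: order_gt_0_iff_finite)
  moreover have "length (snd (\<phi> (f, origin))) = k"
    using closed by (auto simp: mem_Times_iff)
  ultimately show ?thesis
    using map_mult_eq_zeros_iff[of "int (order G)" "snd (\<phi> (f, origin))"] by simp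
qed

definition phi' :: "(int list \<Rightarrow> 'a) \<Rightarrow> (int list \<Rightarrow> 'a)" where
  "phi' f = fst (\<phi> (f, origin))"

lemma phi_base: "f \<in> \<Sigma> \<Longrightarrow> \<phi> (f, origin) = (phi' f, origin)"
  using phi_base_snd by (simp add: phi'_def prod_eq_iff)

lemma phi'_closed: "f \<in> \<Sigma> \<Longrightarrow> phi' f \<in> \<Sigma>"
  using \<Phi>.hom_closed[of "(f, origin)"] by (simp add: phi_base)

lemma phi_hom_base: "\<phi> \<in> hom (wreath_base G k) (wreath_base G k)"
  by (auto intro!: homI simp: phi_base phi'_closed simp del: wreath_mult)

text \<open>The automorphism of \<open>\<int>\<^sup>k = W / \<Sigma>\<close> induced by \<open>\<phi>\<close>.\<close>

definition psi :: "int list \<Rightarrow> int list" where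
  "psi x = snd (\<phi> (\<lambda>_. \<one>, x))"

lemma psi_length: "length x = k \<Longrightarrow> length (psi x) = k"
  using \<Phi>.hom_closed[of "(\<lambda>_. \<one>, x)"] by (auto simp: psi_def mem_Times_iff)

lemma phi_snd:
  assumes f: "f \<in> \<Sigma>" and x: "length x = k"
  shows "snd (\<phi> (f, x)) = psi x"
proof -
  have "(f, x) = (f, origin) \<otimes>\<^bsub>W\<^esub> (\<lambda>_. \<one>, x)"
    using x by (simp add: vadd_zero_left sigma_carrier_closed[OF f])
  then have "\<phi> (f, x) = (phi' f, origin) \<otimes>\<^bsub>W\<^esub> \<phi> (\<lambda>_. \<one>, x)"
    using f x by (simp add: phi_base \<Phi>.hom_mult del: wreath_mult)
  moreover have "length (psi x) = k"
    by (rule psi_length[OF x])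
  moreover obtain t y where "\<phi> (\<lambda>_. \<one>, x) = (t, y)"
    by fastforce
  ultimately show ?thesis
    by (simp add: psi_def vadd_zero_left)
qed

lemma psi_scale:
  assumes x: "length x = k"
  shows "psi (map ((*) (int m)) x) = map ((*) (int m)) (psi x)"
proof -
  have a: "(\<lambda>_. \<one>, x) \<in> carrier W"
    using x by simp
  obtain g where pow: "(\<lambda>_. \<one>, x) [^]\<^bsub>W\<^esub> m = (g, map ((*) (int m)) x)" and g: "g \<in> \<Sigma>"
    using \<Phi>.G.nat_pow_closed[OF a, of m] wreath_pow_snd[OF a, of m]
    by (metis mem_Sigma_iff prod.collapse snd_conv wreath_carrier)
  have "psi (map ((*) (int m)) x) = snd (\<phi> ((\<lambda>_. \<one>, x) [^]\<^bsub>W\<^esub> m))"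
    using x by (simp add: pow phi_snd[OF g])
  also have "\<dots> = map ((*) (int m)) (psi x)"
    using a \<Phi>.hom_closed[OF a] by (simp add: \<Phi>.hom_nat_pow wreath_pow_snd psi_def)
  finally show ?thesis .
qed

lemma funpow_phi_snd:
  "(f, x) \<in> carrier W \<Longrightarrow> snd ((\<phi> ^^ j) (f, x)) = (psi ^^ j) x"
proof (induction j)
  case (Suc j)
  obtain g y where "(\<phi> ^^ j) (f, x) = (g, y)"
    by fastforce
  with Suc funpow_phi_closed[OF Suc.prems, of j] show ?case
    by (simp add: phi_snd)
qed simp

lemma psi_periodic: "length x = k \<Longrightarrow> (psi ^^ n) x = x"
  using funpow_phi_snd[of "\<lambda>_. \<one>" x n] periodic by simp

lemma psi_inj: "inj_on psi (zvec k)"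
proof (rule inj_onI)
  fix x y assume "x \<in> zvec k" "y \<in> zvec k" "psi x = psi y"
  moreover obtain m where "n = Suc m"
    using period_pos gr0_implies_Suc by blast
  ultimately show "x = y"
    using psi_periodic by (metis funpow_Suc_right comp_apply zvec_iff)
qed

lemma phi_one_snd: "length x = k \<Longrightarrow> \<phi> (\<lambda>_. \<one>, x) = (fst (\<phi> (\<lambda>_. \<one>, x)), psi x) \<and> fst (\<phi> (\<lambda>_. \<one>, x)) \<in> \<Sigma>"
  using \<Phi>.hom_closed[of "(\<lambda>_. \<one>, x)"] by (auto simp: psi_def mem_Times_iff)

lemma phi'_shift:
  assumes f: "f \<in> \<Sigma>" and x: "length x = k"
  shows "phi' (shift k G x f) = shift k G (psi x) (phi' f)"
proof -
  have sf: "shift k G x f \<in> \<Sigma>"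
    by (rule shift_in_sigma_carrier[OF f x])
  define t where "t = fst (\<phi> (\<lambda>_. \<one>, x))"
  have t: "\<phi> (\<lambda>_. \<one>, x) = (t, psi x)" "t \<in> \<Sigma>"
    using phi_one_snd[OF x] by (simp_all add: t_def)
  have conj: "(\<lambda>_. \<one>, x) \<otimes>\<^bsub>W\<^esub> (f, origin) = (shift k G x f, origin) \<otimes>\<^bsub>W\<^esub> (\<lambda>_. \<one>, x)"
    using x by (simp add: vadd_zero_left vadd_zero_right sigma_carrier_closed[OF sf] shift_closed[OF f])
  have "\<phi> (\<lambda>_. \<one>, x) \<otimes>\<^bsub>W\<^esub> \<phi> (f, origin) = \<phi> ((\<lambda>_. \<one>, x) \<otimes>\<^bsub>W\<^esub> (f, origin))"
    using f x by (intro \<Phi>.hom_mult[symmetric]) simp_all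
  also have "\<dots> = \<phi> ((shift k G x f, origin) \<otimes>\<^bsub>W\<^esub> (\<lambda>_. \<one>, x))"
    by (simp only: conj)
  also have "\<dots> = \<phi> (shift k G x f, origin) \<otimes>\<^bsub>W\<^esub> \<phi> (\<lambda>_. \<one>, x)"
    using sf x by (intro \<Phi>.hom_mult) simp_all
  finally have "(t, psi x) \<otimes>\<^bsub>W\<^esub> (phi' f, origin) = (phi' (shift k G x f), origin) \<otimes>\<^bsub>W\<^esub> (t, psi x)"
    by (simp only: t(1) phi_base[OF f] phi_base[OF sf])
  then have "t z \<otimes> shift k G (psi x) (phi' f) z = phi' (shift k G x f) z \<otimes> t z" for z
    by (simp add: shift_zero[OF t(2)] fun_eq_iff)
  then show ?thesis
    using sigma_carrier_closed[OF t(2)] sigma_carrier_closed[OF phi'_closed[OF sf]]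
      shift_closed[OF phi'_closed[OF f]]
    by (simp add: fun_eq_iff m_comm)
qed

definition psi_orbit :: "int list \<Rightarrow> int list set" where
  "psi_orbit x = range (\<lambda>j. (psi ^^ j) x)"

lemma funpow_psi_length: "length x = k \<Longrightarrow> length ((psi ^^ j) x) = k"
  by (induction j) (simp_all add: psi_length)

lemma psi_orbit_length: "length x = k \<Longrightarrow> y \<in> psi_orbit x \<Longrightarrow> length y = k"
  by (auto simp: psi_orbit_def funpow_psi_length)

lemma self_in_psi_orbit: "x \<in> psi_orbit x"
  unfolding psi_orbit_def by (metis funpow_0 rangeI)

lemma psi_orbit_finite:
  assumes x: "length x = k"
  shows "finite (psi_orbit x)"
proof -
  have "(psi ^^ j) x \<in> (\<lambda>j. (psi ^^ j) x) ` {..<n}" for j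
    using funpow_mod_eq[OF psi_periodic[OF x], of j] period_pos
    by (metis image_eqI lessThan_iff mod_less_divisor)
  then have "psi_orbit x \<subseteq> (\<lambda>j. (psi ^^ j) x) ` {..<n}"
    unfolding psi_orbit_def by blast
  then show ?thesis
    by (rule finite_subset) simp
qed

lemma psi_image_psi_orbit:
  assumes x: "length x = k"
  shows "psi ` psi_orbit x = psi_orbit x"
proof
  show "psi ` psi_orbit x \<subseteq> psi_orbit x"
    unfolding psi_orbit_def by (auto simp flip: comp_apply[of psi "psi ^^ _"] funpow.simps(2))
  show "psi_orbit x \<subseteq> psi ` psi_orbit x"
  proof
    fix y assume "y \<in> psi_orbit x"
    then obtain j where y: "y = (psi ^^ j) x"
      by (auto simp: psi_orbit_def)
    have "y = (psi ^^ (Suc (j + n - 1))) x"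
      using period_pos psi_periodic[OF x] by (simp add: y funpow_add[of j n] flip: funpow.simps(2))
    then show "y \<in> psi ` psi_orbit x"
      by (auto simp: psi_orbit_def)
  qed
qed

lemma funpow_psi_scale:
  "length e = k \<Longrightarrow> (psi ^^ j) (map ((*) (int m)) e) = map ((*) (int m)) ((psi ^^ j) e)"
  by (induction j) (simp_all add: psi_scale funpow_psi_length)

lemma psi_orbit_scaled_apart:
  assumes e: "length e = k" and y: "y \<in> psi_orbit (map ((*) (int m)) e)"
    and ne: "y \<noteq> map ((*) (int m)) e"
  shows "\<exists>l < k. int m \<le> \<bar>y ! l - map ((*) (int m)) e ! l\<bar>"
proof -
  obtain j where "y = (psi ^^ j) (map ((*) (int m)) e)"
    using y by (auto simp: psi_orbit_def)
  then have y: "y = map ((*) (int m)) ((psi ^^ j) e)"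
    by (simp add: funpow_psi_scale e)
  then have "(psi ^^ j) e \<noteq> e"
    using ne by auto
  then obtain l where l: "l < k" "(psi ^^ j) e ! l \<noteq> e ! l"
    using e funpow_psi_length[OF e, of j] nth_equalityI[of "(psi ^^ j) e" e] by auto
  then have "1 \<le> \<bar>(psi ^^ j) e ! l - e ! l\<bar>"
    by linarith
  then have "int m \<le> \<bar>int m * ((psi ^^ j) e ! l - e ! l)\<bar>"
    by (simp add: abs_mult mult_le_cancel_left1)
  then show ?thesis
    using l e funpow_psi_length[OF e, of j] by (auto simp: y right_diff_distrib)
qed

abbreviation "H \<equiv> wreath_base G k"

sublocale base: comm_group H
  by (rule wreath_base_comm_group)

definition orbit_product :: "(int list \<Rightarrow> 'a) \<Rightarrow> int list \<Rightarrow> (int list \<Rightarrow> 'a) \<times> int list" where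
  "orbit_product s x = finprod H (\<lambda>y. (shift k G y s, origin)) (psi_orbit x)"

lemma orbit_product_fixed:
  assumes s: "s \<in> \<Sigma>" "phi' s = s" and x: "length x = k"
  shows "orbit_product s x \<in> carrier H" and "\<phi> (orbit_product s x) = orbit_product s x"
proof -
  let ?h = "\<lambda>y. (shift k G y s, origin)"
  have h: "?h \<in> psi_orbit x \<rightarrow> carrier H"
    using psi_orbit_length[OF x] shift_in_sigma_carrier[OF s(1)] by auto
  then show "orbit_product s x \<in> carrier H"
    unfolding orbit_product_def by (rule base.finprod_closed)
  have "\<phi> (orbit_product s x) = finprod H (\<lambda>y. \<phi> (?h y)) (psi_orbit x)"
    unfolding orbit_product_def by (rule base.hom_finprod[OF base.comm_group_axioms phi_hom_base h])
  also have "\<dots> = finprod H (\<lambda>y. ?h (psi y)) (psi_orbit x)"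
    using h psi_orbit_length[OF x] s shift_in_sigma_carrier[OF s(1)]
    by (intro base.finprod_cong') (auto simp: phi_base phi'_shift psi_length)
  also have "\<dots> = finprod H ?h (psi ` psi_orbit x)"
  proof (rule base.finprod_reindex[symmetric])
    show "inj_on psi (psi_orbit x)"
      using psi_inj psi_orbit_length[OF x] by (auto intro: inj_on_subset)
  qed (use h psi_image_psi_orbit[OF x] in simp)
  finally show "\<phi> (orbit_product s x) = orbit_product s x"
    by (simp add: psi_image_psi_orbit[OF x] orbit_product_def)
qed

lemma orbit_product_apply:
  assumes s: "s \<in> \<Sigma>" and x: "length x = k"
  shows "fst (orbit_product s x) w = finprod G (\<lambda>y. shift k G y s w) (psi_orbit x)"
  unfolding orbit_product_def using psi_orbit_length[OF x] shift_in_sigma_carrier[OF s]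
  by (subst base.hom_finprod[OF comm_group_axioms evaluation_hom]) auto

text \<open>If the orbit points are more than \<open>2B\<close> apart, only the translate by \<open>x\<close> itself
  contributes at \<open>x + z\<^sub>0\<close>.\<close>

lemma orbit_product_at_shifted_point:
  assumes s: "s \<in> \<Sigma>" and z0: "s z0 \<noteq> \<one>"
    and B: "\<forall>a \<in> {z. s z \<noteq> \<one>}. \<forall>l < length a. \<bar>a ! l\<bar> \<le> B"
    and e: "length e = k" and m: "2 * B < int m"
  shows "fst (orbit_product s (map ((*) (int m)) e)) (vadd (map ((*) (int m)) e) z0) = s z0"
proof -
  define x where "x = map ((*) (int m)) e"
  define w where "w = vadd x z0"
  have x: "length x = k"
    using e by (simp add: x_def)
  have z0k: "length z0 = k"
    using z0 sigma_carrier_outside[OF s] by blast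
  have w: "length w = k" "vsub w x = z0"
    using x z0k by (simp_all add: w_def vsub_vadd_cancel)
  have other: "shift k G y s w = \<one>" if y: "y \<in> psi_orbit x" "y \<noteq> x" for y
  proof (rule ccontr)
    assume "shift k G y s w \<noteq> \<one>"
    then have support: "vsub w y \<in> {z. s z \<noteq> \<one>}"
      using w by (simp add: shift_def)
    obtain l where l: "l < k" "int m \<le> \<bar>y ! l - x ! l\<bar>"
      using psi_orbit_scaled_apart[OF e] y unfolding x_def by blast
    have "length y = k"
      using psi_orbit_length[OF x y(1)] .
    then have "vsub w y ! l = z0 ! l - (y ! l - x ! l)"
      using l x z0k by (simp add: w_def)
    moreover have "\<bar>vsub w y ! l\<bar> \<le> B" "\<bar>z0 ! l\<bar> \<le> B"
      using B support z0 l(1) w(1) z0k \<open>length y = k\<close> by auto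
    ultimately show False
      using l(2) m by linarith
  qed
  have "fst (orbit_product s x) w = finprod G (\<lambda>y. shift k G y s w) (psi_orbit x)"
    by (rule orbit_product_apply[OF s x])
  also have "\<dots> = finprod G (\<lambda>y. if y = x then s z0 else \<one>) (psi_orbit x)"
    using other w by (intro finprod_cong') (auto simp: shift_def sigma_carrier_closed[OF s])
  also have "\<dots> = s z0"
    using finprod_singleton_swap[OF self_in_psi_orbit psi_orbit_finite[OF x], of "\<lambda>_. s z0"]
    by (simp add: sigma_carrier_closed[OF s])
  finally show ?thesis
    by (simp add: x_def w_def)
qed

lemma infinite_fixed_points:
  assumes s: "s \<in> \<Sigma>" "phi' s = s" and z0: "s z0 \<noteq> \<one>"
  shows "infinite {f \<in> \<Sigma>. phi' f = f}"
proof
  let ?Fix = "{f \<in> \<Sigma>. phi' f = f}"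
  assume "finite ?Fix"
  then have "finite (\<Union>f \<in> ?Fix. {z. f z \<noteq> \<one>})"
    by (auto intro: sigma_carrier_finite_support)
  then obtain M where M: "\<forall>a \<in> (\<Union>f \<in> ?Fix. {z. f z \<noteq> \<one>}). \<forall>l < length a. \<bar>a ! l\<bar> \<le> M"
    using finite_int_lists_bounded by blast
  obtain B where "0 \<le> B" and B: "\<forall>a \<in> {z. s z \<noteq> \<one>}. \<forall>l < length a. \<bar>a ! l\<bar> \<le> B"
    using finite_int_lists_bounded[OF sigma_carrier_finite_support[OF s(1)]] by blast
  define m where "m = nat (2 * B + \<bar>M\<bar> + 1)"
  define e where "e = 1 # replicate (k - 1) (0::int)"
  define x where "x = map ((*) (int m)) e"
  have e: "length e = k" "e ! 0 = 1"
    using dimension_pos by (simp_all add: e_def)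
  have x: "length x = k"
    using e by (simp add: x_def)
  have z0k: "length z0 = k"
    using z0 sigma_carrier_outside[OF s(1)] by blast
  obtain u where u: "orbit_product s x = (u, origin)" "u \<in> \<Sigma>"
    using orbit_product_fixed(1)[OF s x] by auto
  then have "u \<in> ?Fix"
    using orbit_product_fixed(2)[OF s x] by (simp add: phi_base)
  moreover have "2 * B < int m"
    using \<open>0 \<le> B\<close> by (simp add: m_def)
  then have "fst (orbit_product s x) (vadd x z0) = s z0"
    unfolding x_def by (rule orbit_product_at_shifted_point[OF s(1) z0 B e(1)])
  then have "u (vadd x z0) = s z0"
    using u(1) by simp
  ultimately have "vadd x z0 \<in> (\<Union>f \<in> ?Fix. {z. f z \<noteq> \<one>})"
    using z0 by (intro UN_I[of u]) simp_all
  then have "\<bar>vadd x z0 ! 0\<bar> \<le> M"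
    using x z0k dimension_pos by (intro M[rule_format]) simp_all
  moreover have "vadd x z0 ! 0 = int m + z0 ! 0"
    using x z0k e dimension_pos by (simp add: x_def)
  moreover have "\<bar>z0 ! 0\<bar> \<le> B"
    using B z0 z0k dimension_pos by auto
  ultimately show False
    using \<open>0 \<le> B\<close> by (simp add: m_def)
qed

lemma fixed_points_trivial_if_finite:
  assumes fin: "finite {a \<in> carrier H. \<phi> a = a}"
  shows "{a \<in> carrier H. \<phi> a = a} \<subseteq> {\<one>\<^bsub>H\<^esub>}"
proof
  fix a assume "a \<in> {a \<in> carrier H. \<phi> a = a}"
  then obtain s where a: "a = (s, origin)" and s: "s \<in> \<Sigma>" "phi' s = s"
    by (auto simp: phi_base)
  have "{f \<in> \<Sigma>. phi' f = f} = fst ` {a \<in> carrier H. \<phi> a = a}"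
    by (force simp: phi_base)
  then have "finite {f \<in> \<Sigma>. phi' f = f}"
    using fin by simp
  then have "s = (\<lambda>_. \<one>)"
    using infinite_fixed_points[OF s] by blast
  then show "a \<in> {\<one>\<^bsub>H\<^esub>}"
    by (simp add: a)
qed

lemma wreath_base_pow: "a [^]\<^bsub>H\<^esub> (j::nat) = a [^]\<^bsub>W\<^esub> j"
  by (induction j) (simp_all del: wreath_mult)

lemma reidemeister_number_base:
  "reidemeister_number H \<phi> = 1 \<or> reidemeister_number H \<phi> = \<infinity>"
proof -
  interpret periodic_endomorphism H \<phi> n "order G"
  proof (intro periodic_endomorphism.intro periodic_endomorphism_axioms.intro base.comm_group_axioms)
    show "\<phi> \<in> hom H H"
      by (rule phi_hom_base)
    show "(\<phi> ^^ n) a = a" if "a \<in> carrier H" for a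
      using periodic that by auto
    show "0 < order G"
      using finite_carrier by (simp add: order_gt_0_iff_finite)
    show "a [^]\<^bsub>H\<^esub> order G = \<one>\<^bsub>H\<^esub>" if "a \<in> carrier H" for a
      using that finite_carrier by (auto simp: wreath_base_pow wreath_pow_base pow_order_eq_1)
  qed (rule period_pos)
  show ?thesis
    by (rule reidemeister_number_one_or_infinite[OF fixed_points_trivial_if_finite])
qed

end

theorem mainTheorem5:
  fixes G :: "('a, 'b) monoid_scheme" and k :: nat
    and phi :: "(int list \<Rightarrow> 'a) \<times> int list \<Rightarrow> (int list \<Rightarrow> 'a) \<times> int list"
  assumes "comm_group G" and "finite (carrier G)" and "k \<ge> 1"
    and "phi \<in> iso (wreath G k) (wreath G k)"
    and "\<exists>n>0. \<forall>a \<in> carrier (wreath G k). (phi ^^ n) a = a"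
  shows "reidemeister_number (wreath_base G k) phi = 1 \<or>
         reidemeister_number (wreath_base G k) phi = \<infinity>"
proof -
  obtain n where "n > 0" "\<forall>a \<in> carrier (wreath G k). (phi ^^ n) a = a"
    using assms(5) by blast
  with assms(1-4) interpret wreath_automorphism G k phi n
    by (simp add: wreath_automorphism_def wreath_automorphism_axioms_def)
  show ?thesis
    by (rule reidemeister_number_base)
qed

end
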